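(* Let $A$ be an $n\times n$ matrix with a designated set of large positions, and let $(X,Y)$ be a $q$-good restriction. Let $X_1,X_2\subseteq X$ and $Y_1,Y_2\subseteq Y$ with $|Y_1|=|X_1|$, $|Y_2|=|X_2|$. Suppose that $(X_1,Y_1)$ has a $p_1$-strong line and $(X_2,Y_2)$ has a $p_2$-strong line, where $(1-p_1)|X_1|>1$, $(1-p_2)|X_2|>1$ and \[(1-p_1)(1-p_2)\frac{|X_1||X_2|}{|X|^2}\ge 4q.\] Then these two strong lines are the same line of $A$: either both are row $i$ for the same $i$, or both are column $j$ for the same $j$.
   Context: Let $A=(a_{ij})_{i,j\in[n]}$ with a designated set $L\subseteq[n]\times[n]$ of large positions. A restriction is $(X,Y)$ with $X,Y\subseteq[n]$, $|X|=|Y|$; a generalized diagonal of $A[X,Y]$ is $\{(i,\sigma(i)):i\in X\}$ for a bijection $\sigma:X\to Y$, random meaning uniform $\sigma$; it is good if it contains exactly one large position; $(X,Y)$ is $q$-good if a random generalized diagonal is good with probability $\ge1-q$. For $i\in X$, row $i$ is $p$-strong for $(X,Y)$ if at least $(1-p)|Y|$ of the positions $\{(i,j):j\in Y\}$ are large; for $j\in Y$, column $j$ is $p$-strong for $(X,Y)$ if at least $(1-p)|X|$ of $\{(i,j):i\in X\}$ are large. $(X,Y)$ has a $p$-strong line if some row or column is $p$-strong for it. *)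

theory Defs
  imports Complex_Main "HOL-Library.FuncSet"
begin

text \<open>Positions of the matrix are pairs (i,j) with i,j in {..<n}; only the set L of
large positions matters for the notions below (the entries of A are irrelevant).\<close>

definition restriction :: "nat \<Rightarrow> nat set \<Rightarrow> nat set \<Rightarrow> bool" where
  "restriction n X Y \<longleftrightarrow> X \<subseteq> {..<n} \<and> Y \<subseteq> {..<n} \<and> card X = card Y"

text \<open>Generalized diagonals of A[X,Y] correspond to bijections X \<rightarrow> Y (extensional).\<close>
definition gen_diags :: "nat set \<Rightarrow> nat set \<Rightarrow> (nat \<Rightarrow> nat) set" where
  "gen_diags X Y = {\<sigma> \<in> extensional X. bij_betw \<sigma> X Y}"

definition good_diag :: "(nat \<times> nat) set \<Rightarrow> nat set \<Rightarrow> (nat \<Rightarrow> nat) \<Rightarrow> bool" where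
  "good_diag L X \<sigma> \<longleftrightarrow> card {i \<in> X. (i, \<sigma> i) \<in> L} = 1"

definition prob_good :: "(nat \<times> nat) set \<Rightarrow> nat set \<Rightarrow> nat set \<Rightarrow> real" where
  "prob_good L X Y = real (card {\<sigma> \<in> gen_diags X Y. good_diag L X \<sigma>}) / real (card (gen_diags X Y))"

definition q_good :: "(nat \<times> nat) set \<Rightarrow> real \<Rightarrow> nat set \<Rightarrow> nat set \<Rightarrow> bool" where
  "q_good L q X Y \<longleftrightarrow> prob_good L X Y \<ge> 1 - q"

datatype line = Row nat | Col nat

fun strong_line :: "(nat \<times> nat) set \<Rightarrow> real \<Rightarrow> nat set \<Rightarrow> nat set \<Rightarrow> line \<Rightarrow> bool" where
  "strong_line L p X Y (Row i) \<longleftrightarrow>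
     i \<in> X \<and> real (card {j \<in> Y. (i, j) \<in> L}) \<ge> (1 - p) * real (card Y)"
| "strong_line L p X Y (Col j) \<longleftrightarrow>
     j \<in> Y \<and> real (card {i \<in> X. (i, j) \<in> L}) \<ge> (1 - p) * real (card X)"

end

theory Submission
  imports Defs "HOL-Library.Disjoint_Sets"
begin

text \<open>
  Suppose the two strong lines differ, and let \<open>s\<close>, \<open>t\<close> be the numbers of large positions
  on them. Pair a large position of the first line with one of the second line lying in another
  row and another column: two distinct lines share at most one position, and a position off a line
  shares its row or column with only one position of that line, so there are at least
  \<open>(s - 1)(t - 1) \<ge> (1 - p\<^sub>1)(1 - p\<^sub>2)|X\<^sub>1||X\<^sub>2|/4\<close> such pairs.
  A random generalized diagonal of \<open>(X, Y)\<close>, with \<open>m = |X|\<close>, passes through both positions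
  of a given pair with probability \<open>1/(m(m - 1))\<close>, and is then not good. A diagonal meets each
  line at most once, so these events are disjoint, and the probability of a diagonal that is not
  good exceeds \<open>(s - 1)(t - 1)/m\<^sup>2 \<ge> q\<close>, contradicting \<open>q\<close>-goodness.
\<close>

definition diags_through :: "nat set \<Rightarrow> nat set \<Rightarrow> (nat \<times> nat) set \<Rightarrow> (nat \<Rightarrow> nat) set" where
  "diags_through X Y P = {\<sigma> \<in> gen_diags X Y. \<forall>p \<in> P. \<sigma> (fst p) = snd p}"

lemma diags_through_empty [simp]: "diags_through X Y {} = gen_diags X Y"
  by (simp add: diags_through_def)

lemma finite_gen_diags:
  assumes "finite X" "finite Y"
  shows "finite (gen_diags X Y)"
proof (rule finite_subset)
  show "gen_diags X Y \<subseteq> X \<rightarrow>\<^sub>E Y" by (auto simp: gen_diags_def PiE_def bij_betw_def)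
qed (simp add: assms finite_PiE)

lemma bij_betw_restrict_diags_through:
  assumes "a \<in> X" "b \<in> Y" "a \<notin> fst ` P"
  shows "bij_betw (\<lambda>\<sigma>. restrict \<sigma> (X - {a}))
           (diags_through X Y (insert (a, b) P)) (diags_through (X - {a}) (Y - {b}) P)"
proof (rule bij_betw_byWitness[where f' = "\<lambda>\<tau>. \<tau>(a := b)"])
  show "\<forall>\<sigma> \<in> diags_through X Y (insert (a, b) P). (restrict \<sigma> (X - {a}))(a := b) = \<sigma>"
    using assms by (auto simp: diags_through_def gen_diags_def extensional_def fun_eq_iff)
  show "\<forall>\<tau> \<in> diags_through (X - {a}) (Y - {b}) P. restrict (\<tau>(a := b)) (X - {a}) = \<tau>"
    using assms by (auto simp: diags_through_def gen_diags_def extensional_def fun_eq_iff)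
  show "(\<lambda>\<sigma>. restrict \<sigma> (X - {a})) ` diags_through X Y (insert (a, b) P)
          \<subseteq> diags_through (X - {a}) (Y - {b}) P"
  proof safe
    fix \<sigma> assume \<sigma>: "\<sigma> \<in> diags_through X Y (insert (a, b) P)"
    then have bij: "bij_betw \<sigma> X Y" and "\<sigma> a = b" and through: "\<forall>p \<in> P. \<sigma> (fst p) = snd p"
      by (auto simp: diags_through_def gen_diags_def)
    then have "bij_betw \<sigma> (X - {a}) (Y - {b})"
      using assms(1,2) by (intro bij_betw_DiffI[OF bij bij_betw_singletonI]) auto
    then have "bij_betw (restrict \<sigma> (X - {a})) (X - {a}) (Y - {b})"
      by (rule bij_betw_cong[THEN iffD1, rotated]) simp
    with \<sigma> through assms(3) show "restrict \<sigma> (X - {a}) \<in> diags_through (X - {a}) (Y - {b}) P"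
      by (auto simp: diags_through_def gen_diags_def extensional_def)
  qed
  show "(\<lambda>\<tau>. \<tau>(a := b)) ` diags_through (X - {a}) (Y - {b}) P
          \<subseteq> diags_through X Y (insert (a, b) P)"
  proof safe
    fix \<tau> assume \<tau>: "\<tau> \<in> diags_through (X - {a}) (Y - {b}) P"
    then have "bij_betw \<tau> (X - {a}) (Y - {b})" by (simp add: diags_through_def gen_diags_def)
    then have "bij_betw (\<tau>(a := b)) (X - {a}) (Y - {b})"
      by (rule bij_betw_cong[THEN iffD1, rotated]) simp
    moreover have "bij_betw (\<tau>(a := b)) {a} {b}" by simp
    ultimately have "bij_betw (\<tau>(a := b)) (X - {a} \<union> {a}) (Y - {b} \<union> {b})"
      by (rule bij_betw_combine) simp
    moreover have "X - {a} \<union> {a} = X" "Y - {b} \<union> {b} = Y" using assms by auto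
    ultimately show "\<tau>(a := b) \<in> diags_through X Y (insert (a, b) P)"
      using \<tau> assms by (auto simp: diags_through_def gen_diags_def extensional_def)
  qed
qed

lemma card_gen_diags:
  "finite X \<Longrightarrow> finite Y \<Longrightarrow> card Y = card X \<Longrightarrow> card (gen_diags X Y) = fact (card X)"
proof (induction "card X" arbitrary: X Y)
  case 0
  then have "X = {}" "Y = {}" by auto
  then have "gen_diags X Y = {\<lambda>_. undefined}"
    by (simp add: gen_diags_def bij_betw_def)
  then show ?case using \<open>X = {}\<close> by simp
next
  case (Suc k)
  then obtain a where a: "a \<in> X" by fastforce
  have split: "gen_diags X Y = (\<Union>b\<in>Y. diags_through X Y {(a, b)})"
    using a by (auto simp: diags_through_def gen_diags_def bij_betw_def)
  have "card (gen_diags X Y) = (\<Sum>b\<in>Y. card (diags_through X Y {(a, b)}))"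
    unfolding split by (rule card_UN_disjoint)
       (use Suc.prems finite_gen_diags in \<open>auto simp: diags_through_def\<close>)
  also have "\<dots> = (\<Sum>b\<in>Y. fact k)"
  proof (rule sum.cong)
    fix b assume "b \<in> Y"
    then have "card (diags_through X Y {(a, b)}) = card (gen_diags (X - {a}) (Y - {b}))"
      using bij_betw_restrict_diags_through[of a X b Y "{}"] a by (simp add: bij_betw_same_card)
    also have "\<dots> = fact k"
      using Suc.hyps Suc.prems \<open>b \<in> Y\<close> a by (simp flip: Suc.hyps(2))
    finally show "card (diags_through X Y {(a, b)}) = fact k" .
  qed simp
  also have "\<dots> = fact (card X)" using Suc.prems(3) by (simp flip: Suc.hyps(2))
  finally show ?case .
qed

lemma card_diags_through:
  assumes "finite X" "finite Y" "card Y = card X" "P \<subseteq> X \<times> Y" "inj_on fst P" "inj_on snd P"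
  shows "card (diags_through X Y P) = fact (card X - card P)"
proof -
  have "finite P" using assms(1,2,4) finite_subset by blast
  then show ?thesis using assms
  proof (induction P arbitrary: X Y rule: finite_induct)
    case empty
    then show ?case by (simp add: card_gen_diags)
  next
    case (insert p P)
    obtain a b where p: "p = (a, b)" by fastforce
    have ab: "a \<in> X" "b \<in> Y" using insert.prems p by auto
    have off_a: "a \<notin> fst ` P" and off_b: "b \<notin> snd ` P"
      using insert.prems(5,6) insert.hyps(2) by (simp_all add: p)
    have "P \<subseteq> (X - {a}) \<times> (Y - {b})"
    proof
      fix q assume "q \<in> P"
      then have "fst q \<noteq> a" "snd q \<noteq> b" using off_a off_b by (auto intro: imageI)
      then show "q \<in> (X - {a}) \<times> (Y - {b})"
        using insert.prems(4) \<open>q \<in> P\<close> by (auto simp: mem_Times_iff)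
    qed
    have "card (diags_through X Y (insert p P)) = card (diags_through (X - {a}) (Y - {b}) P)"
      using bij_betw_same_card[OF bij_betw_restrict_diags_through[OF ab off_a]] p by simp
    also have "\<dots> = fact (card (X - {a}) - card P)"
      using \<open>P \<subseteq> (X - {a}) \<times> (Y - {b})\<close> insert.prems(1-3,5,6) ab
      by (intro insert.IH) (auto intro: inj_on_subset)
    finally show ?case using insert.hyps ab by simp
  qed
qed

lemma not_good_diag_if_two_large:
  assumes "finite X" "\<sigma> \<in> diags_through X Y {p, p'}" "p \<in> L" "p' \<in> L"
    and "fst p \<in> X" "fst p' \<in> X" "fst p \<noteq> fst p'"
  shows "\<not> good_diag L X \<sigma>"
proof
  have "{fst p, fst p'} \<subseteq> {i \<in> X. (i, \<sigma> i) \<in> L}"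
    using assms(2-6) by (auto simp: diags_through_def)
  then have "card {fst p, fst p'} \<le> card {i \<in> X. (i, \<sigma> i) \<in> L}"
    using assms(1) by (intro card_mono) auto
  moreover assume "good_diag L X \<sigma>"
  ultimately show False using assms(7) by (simp add: good_diag_def)
qed

lemma card_good_diags_le:
  assumes fin: "finite X" "finite Y" "card Y = card X"
    and Q: "\<And>p p'. (p, p') \<in> Q \<Longrightarrow>
              p \<in> L \<inter> X \<times> Y \<and> p' \<in> L \<inter> X \<times> Y \<and> fst p \<noteq> fst p' \<and> snd p \<noteq> snd p'"
    and disj: "disjoint_family_on (\<lambda>(p, p'). diags_through X Y {p, p'}) Q"
  shows "card Q * fact (card X - 2) + card {\<sigma> \<in> gen_diags X Y. good_diag L X \<sigma>} \<le> fact (card X)"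
proof -
  define U where "U = (\<Union>(p, p') \<in> Q. diags_through X Y {p, p'})"
  define good where "good = {\<sigma> \<in> gen_diags X Y. good_diag L X \<sigma>}"
  have "Q \<subseteq> (X \<times> Y) \<times> (X \<times> Y)" using Q by auto
  then have "finite Q" using fin by (meson finite_SigmaI finite_subset)
  have card_through: "card (diags_through X Y {p, p'}) = fact (card X - 2)"
    if "(p, p') \<in> Q" for p p'
    using Q[OF that] fin by (subst card_diags_through) (auto simp: prod_eq_iff numeral_2_eq_2)
  have "card U = (\<Sum>(p, p') \<in> Q. card (diags_through X Y {p, p'}))"
    unfolding U_def using disj \<open>finite Q\<close> fin
    by (subst card_UN_disjoint') (auto simp: case_prod_beta diags_through_def finite_gen_diags)
  also have "\<dots> = card Q * fact (card X - 2)"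
    using card_through by (simp add: case_prod_beta)
  finally have card_U: "card U = card Q * fact (card X - 2)" .
  have "U \<inter> good = {}"
    using Q fin(1) not_good_diag_if_two_large by (fastforce simp: U_def good_def)
  moreover have "U \<union> good \<subseteq> gen_diags X Y"
    by (auto simp: U_def good_def diags_through_def)
  ultimately have "card U + card good \<le> card (gen_diags X Y)"
    using fin finite_gen_diags by (metis card_Un_disjoint card_mono finite_Un finite_subset)
  then show ?thesis using fin card_gen_diags card_U by (simp add: good_def)
qed

lemma card_pairs_le_prob_not_good:
  assumes "finite X" "finite Y" "card Y = card X"
    and Q: "\<And>p p'. (p, p') \<in> Q \<Longrightarrow>
              p \<in> L \<inter> X \<times> Y \<and> p' \<in> L \<inter> X \<times> Y \<and> fst p \<noteq> fst p' \<and> snd p \<noteq> snd p'"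
    and "disjoint_family_on (\<lambda>(p, p'). diags_through X Y {p, p'}) Q"
  shows "real (card Q) \<le> (1 - prob_good L X Y) * (real (card X) * (real (card X) - 1))"
proof (cases "2 \<le> card X")
  case True
  define m where "m = card X"
  define g where "g = card {\<sigma> \<in> gen_diags X Y. good_diag L X \<sigma>}"
  obtain k where "m = Suc (Suc k)"
    using True unfolding m_def by (metis add_2_eq_Suc le_Suc_ex)
  then have fact_m: "fact m = real m * (real m - 1) * fact (m - 2)"
    by (simp add: algebra_simps)
  have "real (card Q * fact (m - 2) + g) \<le> real (fact m)"
    using card_good_diags_le[OF assms] unfolding m_def g_def by (simp only: of_nat_le_iff)
  moreover have "prob_good L X Y = real g / fact m"
    using assms(1-3) by (simp add: prob_good_def card_gen_diags g_def m_def)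
  ultimately have "real (card Q) * fact (m - 2) \<le> (1 - prob_good L X Y) * fact m"
    by (simp add: field_simps)
  then show ?thesis
    unfolding fact_m m_def[symmetric] by (simp add: mult.assoc[symmetric])
next
  case False
  have "Q = {}"
  proof (rule ccontr)
    assume "Q \<noteq> {}"
    then obtain p p' where "(p, p') \<in> Q" by auto
    from Q[OF this] have "{fst p, fst p'} \<subseteq> X" "fst p \<noteq> fst p'" by (auto simp: mem_Times_iff)
    then have "card {fst p, fst p'} \<le> card X" using \<open>finite X\<close> by (intro card_mono)
    with False \<open>fst p \<noteq> fst p'\<close> show False by simp
  qed
  moreover have "card X = 0 \<or> card X = 1" using False by linarith
  ultimately show ?thesis by auto
qed

fun on_line :: "line \<Rightarrow> nat \<times> nat \<Rightarrow> bool" where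
  "on_line (Row i) p \<longleftrightarrow> fst p = i"
| "on_line (Col j) p \<longleftrightarrow> snd p = j"

fun line_proj :: "line \<Rightarrow> nat \<times> nat \<Rightarrow> nat \<times> nat" where
  "line_proj (Row i) p = (i, snd p)"
| "line_proj (Col j) p = (fst p, j)"

lemma independent_if_ne_line_proj:
  "on_line l q \<Longrightarrow> \<not> on_line l p \<Longrightarrow> q \<noteq> line_proj l p \<Longrightarrow> fst p \<noteq> fst q \<and> snd p \<noteq> snd q"
  by (cases l) (auto simp: prod_eq_iff)

lemma distinct_lines_meet_once:
  "l \<noteq> l' \<Longrightarrow> on_line l p \<Longrightarrow> on_line l' p \<Longrightarrow> on_line l q \<Longrightarrow> on_line l' q \<Longrightarrow> p = q"
  by (cases l; cases l') (auto simp: prod_eq_iff)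

lemma card_independent_pairs:
  assumes "finite P" "finite P'" "l \<noteq> l'" "\<forall>p \<in> P. on_line l p" "\<forall>p' \<in> P'. on_line l' p'"
  shows "(card P - 1) * (card P' - 1)
           \<le> card {(p, p') \<in> P \<times> P'. fst p \<noteq> fst p' \<and> snd p \<noteq> snd p'}"
proof -
  define off where "off = {p \<in> P. \<not> on_line l' p}"
  have "card {p \<in> P. on_line l' p} \<le> 1"
    unfolding One_nat_def
    by (subst card_le_Suc0_iff_eq) (use assms(1,3,4) distinct_lines_meet_once in auto)
  moreover have "card P = card off + card {p \<in> P. on_line l' p}"
    unfolding off_def using assms(1)
    by (subst card_Un_disjoint[symmetric]) (auto intro: arg_cong[where f = card])
  ultimately have "card P - 1 \<le> card off" by linarith
  then have "(card P - 1) * (card P' - 1) \<le> card off * (card P' - 1)"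
    by (rule mult_right_mono) simp
  also have "\<dots> \<le> (\<Sum>p \<in> off. card (P' - {line_proj l' p}))"
  proof -
    have "card P' - 1 \<le> card (P' - {line_proj l' p})" for p
      using diff_card_le_card_Diff[of "{line_proj l' p}" P'] by simp
    then show ?thesis using sum_bounded_below[of off] by (metis of_nat_id)
  qed
  also have "\<dots> = card (SIGMA p:off. P' - {line_proj l' p})"
    using assms(1,2) by (simp add: off_def)
  also have "\<dots> \<le> card {(p, p') \<in> P \<times> P'. fst p \<noteq> fst p' \<and> snd p \<noteq> snd p'}"
    using assms independent_if_ne_line_proj
    by (intro card_mono finite_subset[OF _ finite_cartesian_product[OF assms(1,2)]])
       (auto simp: off_def)
  finally show ?thesis .
qed

lemma diag_meets_line_once:
  assumes "\<sigma> \<in> gen_diags X Y" "fst p \<in> X" "fst q \<in> X" "on_line l p" "on_line l q"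
    and "\<sigma> (fst p) = snd p" "\<sigma> (fst q) = snd q"
  shows "p = q"
  using assms by (cases l) (auto simp: gen_diags_def bij_betw_def inj_on_def prod_eq_iff)

lemma disjoint_diags_through_lines:
  assumes "\<And>p p'. (p, p') \<in> Q \<Longrightarrow> fst p \<in> X \<and> fst p' \<in> X \<and> on_line l p \<and> on_line l' p'"
  shows "disjoint_family_on (\<lambda>(p, p'). diags_through X Y {p, p'}) Q"
proof -
  have "(p, p') = (q, q')" if "(p, p') \<in> Q" "(q, q') \<in> Q"
    and "\<sigma> \<in> diags_through X Y {p, p'}" "\<sigma> \<in> diags_through X Y {q, q'}" for p p' q q' \<sigma>
  proof -
    have "\<sigma> \<in> gen_diags X Y" "\<sigma> (fst p) = snd p" "\<sigma> (fst p') = snd p'"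
      "\<sigma> (fst q) = snd q" "\<sigma> (fst q') = snd q'"
      using that(3,4) by (auto simp: diags_through_def)
    then have "p = q" "p' = q'"
      using assms[OF that(1)] assms[OF that(2)] diag_meets_line_once by metis+
    then show ?thesis by simp
  qed
  then show ?thesis unfolding disjoint_family_on_def by fastforce
qed

lemma strong_line_large_positions:
  assumes "strong_line L p X Y l" "card Y = card X"
  obtains P where "P \<subseteq> L \<inter> X \<times> Y" "\<forall>q \<in> P. on_line l q" "(1 - p) * real (card X) \<le> real (card P)"
proof (cases l)
  case (Row i)
  let ?P = "{i} \<times> {j \<in> Y. (i, j) \<in> L}"
  have "card ?P = card {j \<in> Y. (i, j) \<in> L}" by (rule card_cartesian_product_singleton)
  then show ?thesis using assms Row by (intro that[of ?P]) auto
next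
  case (Col j)
  let ?P = "{i \<in> X. (i, j) \<in> L} \<times> {j}"
  have "card ?P = card {i \<in> X. (i, j) \<in> L}" by (simp add: card_cartesian_product)
  then show ?thesis using assms Col by (intro that[of ?P]) auto
qed

lemma card_pairs_le_prob_not_good_lines:
  assumes "finite X" "finite Y" "card Y = card X" "l \<noteq> l'"
    and "P \<subseteq> L \<inter> X \<times> Y" "P' \<subseteq> L \<inter> X \<times> Y" "\<forall>p \<in> P. on_line l p" "\<forall>p' \<in> P'. on_line l' p'"
  shows "real ((card P - 1) * (card P' - 1))
           \<le> (1 - prob_good L X Y) * (real (card X) * (real (card X) - 1))"
proof -
  define Q where "Q = {(p, p') \<in> P \<times> P'. fst p \<noteq> fst p' \<and> snd p \<noteq> snd p'}"
  have "finite P" "finite P'" using assms(1,2,5,6) by (meson finite_SigmaI finite_subset le_infE)+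
  then have "(card P - 1) * (card P' - 1) \<le> card Q"
    unfolding Q_def using assms(4,7,8) by (rule card_independent_pairs)
  moreover have "disjoint_family_on (\<lambda>(p, p'). diags_through X Y {p, p'}) Q"
    by (rule disjoint_diags_through_lines) (use assms(5-8) in \<open>auto simp: Q_def\<close>)
  then have "real (card Q) \<le> (1 - prob_good L X Y) * (real (card X) * (real (card X) - 1))"
    by (intro card_pairs_le_prob_not_good[OF assms(1-3)]) (use assms(5,6) in \<open>auto simp: Q_def\<close>)
  ultimately show ?thesis by (meson of_nat_mono order_trans)
qed

lemma mult_le_four_mult_pred:
  fixes x y :: real and s t :: nat
  assumes "1 < x" "x \<le> real s" "1 < y" "y \<le> real t"
  shows "x * y \<le> 4 * real ((s - 1) * (t - 1))" "1 \<le> (s - 1) * (t - 1)"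
proof -
  have "2 \<le> s" "2 \<le> t" using assms by linarith+
  then have "x / 2 \<le> real (s - 1)" "y / 2 \<le> real (t - 1)" using assms by linarith+
  then have "x / 2 * (y / 2) \<le> real (s - 1) * real (t - 1)"
    using assms(1,3) by (intro mult_mono) auto
  then show "x * y \<le> 4 * real ((s - 1) * (t - 1))" by simp
  show "1 \<le> (s - 1) * (t - 1)" using \<open>2 \<le> s\<close> \<open>2 \<le> t\<close> by (simp; linarith)
qed

lemma four_mult_lt_of_prob_not_good:
  fixes c x q P :: real and m :: nat
  assumes "1 \<le> c" "c \<le> (1 - P) * (real m * (real m - 1))" "1 - q \<le> P" "4 * q \<le> x / real m ^ 2"
  shows "4 * c < x"
proof -
  have "0 \<le> real m * (real m - 1)" by (cases m) simp_all
  then have "(1 - P) * (real m * (real m - 1)) \<le> q * (real m * (real m - 1))"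
    using assms(3) by (intro mult_right_mono) auto
  then have c_le_q: "c \<le> q * (real m * (real m - 1))" using assms(2) by linarith
  then have c_le: "c \<le> q * real m ^ 2 - q * real m" by (simp add: algebra_simps power2_eq_square)
  have "0 < q * (real m * (real m - 1))" using c_le_q assms(1) by linarith
  then have "0 < q" "0 < m" using \<open>0 \<le> real m * (real m - 1)\<close> by (auto simp: zero_less_mult_iff)
  then have "4 * (q * real m ^ 2) \<le> x" "0 < q * real m"
    using assms(4) by (simp_all add: le_divide_eq algebra_simps)
  with c_le show ?thesis by linarith
qed

theorem lemma2p12:
  fixes n :: nat and L :: "(nat \<times> nat) set" and X Y X1 X2 Y1 Y2 :: "nat set"
    and p1 p2 q :: real and l1 l2 :: line
  assumes "L \<subseteq> {..<n} \<times> {..<n}"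
    and "restriction n X Y"
    and "q_good L q X Y"
    and "X1 \<subseteq> X" and "X2 \<subseteq> X" and "Y1 \<subseteq> Y" and "Y2 \<subseteq> Y"
    and "card Y1 = card X1" and "card Y2 = card X2"
    and "strong_line L p1 X1 Y1 l1"
    and "strong_line L p2 X2 Y2 l2"
    and "(1 - p1) * real (card X1) > 1"
    and "(1 - p2) * real (card X2) > 1"
    and "(1 - p1) * (1 - p2) * (real (card X1) * real (card X2) / real (card X) ^ 2) \<ge> 4 * q"
  shows "l1 = l2"
proof (rule ccontr)
  assume "l1 \<noteq> l2"
  have fin: "finite X" "finite Y" "card Y = card X"
    using assms(2) unfolding restriction_def by (auto intro: finite_subset)
  obtain P1 where P1: "P1 \<subseteq> L \<inter> X1 \<times> Y1" "\<forall>p \<in> P1. on_line l1 p"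
    "(1 - p1) * real (card X1) \<le> real (card P1)"
    using strong_line_large_positions[OF assms(10,8)] by blast
  obtain P2 where P2: "P2 \<subseteq> L \<inter> X2 \<times> Y2" "\<forall>p \<in> P2. on_line l2 p"
    "(1 - p2) * real (card X2) \<le> real (card P2)"
    using strong_line_large_positions[OF assms(11,9)] by blast
  define c where "c = real ((card P1 - 1) * (card P2 - 1))"
  have "c \<le> (1 - prob_good L X Y) * (real (card X) * (real (card X) - 1))"
    unfolding c_def using P1 P2 assms(4-7)
    by (intro card_pairs_le_prob_not_good_lines[OF fin \<open>l1 \<noteq> l2\<close>]) auto
  moreover note bounds = mult_le_four_mult_pred[OF assms(12) P1(3) assms(13) P2(3)]
  then have "1 \<le> c" unfolding c_def by (metis of_nat_1 of_nat_le_iff)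
  ultimately have "4 * c < (1 - p1) * real (card X1) * ((1 - p2) * real (card X2))"
    using assms(3,14) unfolding q_good_def
    by (intro four_mult_lt_of_prob_not_good[of c]) (simp_all add: algebra_simps)
  with bounds(1) show False unfolding c_def by linarith
qed

end
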